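(* For a graph $G$ and integer $\tau\ge 1$ define $$Q_{\mathrm{Del\text{-}N}}(G,\tau)=-\min\{\,|V(G)|-|V(G^* )| : G^*\subseteq G,\ \deg(G^* )\le\tau\,\},$$ the negative of the minimum number of nodes whose deletion (with incident edges) leaves maximum degree at most $\tau$. Then: (1) for fixed $G$, $Q_{\mathrm{Del\text{-}N}}(G,\tau)$ is non-decreasing in $\tau$ and equals $0$ for $\tau\ge\deg(G)$; (2) for any node-neighboring graphs $G,G'$, $|Q_{\mathrm{Del\text{-}N}}(G,\tau)-Q_{\mathrm{Del\text{-}N}}(G',\tau)|\le1$ for all $\tau$; (3) for node-neighboring $G,G'$ with $G\subseteq G'$, $Q_{\mathrm{Del\text{-}N}}(G,\tau)\ge Q_{\mathrm{Del\text{-}N}}(G',\tau)$ for all $\tau$.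
   Context: Graphs are finite, simple, undirected; $\deg(G)$ is the maximum degree. For graphs $H,G$, $H\subseteq G$ means $H$ is obtained from $G$ by deleting a (possibly empty) set of nodes together with all edges incident to them. Two graphs $G,G'$ are node-neighboring if one is obtained from the other by deleting a single node together with its incident edges. *)

theory Defs
  imports Main
begin

text \<open>A graph is a pair (V, E) of a vertex set and a set of edges, each edge a
two-element subset of V.  Finite, simple, undirected.\<close>

type_synonym 'a graph = "'a set \<times> 'a set set"

definition verts :: "'a graph \<Rightarrow> 'a set" where "verts G = fst G"
definition edges :: "'a graph \<Rightarrow> 'a set set" where "edges G = snd G"

definition graph :: "'a graph \<Rightarrow> bool" where
  "graph G \<longleftrightarrow> finite (verts G) \<and>
     (\<forall>e\<in>edges G. \<exists>u v. u \<noteq> v \<and> e = {u, v} \<and> u \<in> verts G \<and> v \<in> verts G)"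

definition degree :: "'a graph \<Rightarrow> 'a \<Rightarrow> nat" where
  "degree G v = card {e \<in> edges G. v \<in> e}"

definition max_degree :: "'a graph \<Rightarrow> nat" where
  "max_degree G = (if verts G = {} then 0 else Max (degree G ` verts G))"

definition induced_sub :: "'a graph \<Rightarrow> 'a set \<Rightarrow> 'a graph" where
  "induced_sub G S = (S, {e \<in> edges G. e \<subseteq> S})"

text \<open>H \<subseteq> G in the paper's sense: H obtained from G by deleting a set of nodes.\<close>
definition node_subgraph :: "'a graph \<Rightarrow> 'a graph \<Rightarrow> bool" where
  "node_subgraph H G \<longleftrightarrow> (\<exists>S\<subseteq>verts G. H = induced_sub G S)"

definition delete_node :: "'a graph \<Rightarrow> 'a \<Rightarrow> 'a graph" where
  "delete_node G v = induced_sub G (verts G - {v})"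

definition node_neighboring :: "'a graph \<Rightarrow> 'a graph \<Rightarrow> bool" where
  "node_neighboring G G' \<longleftrightarrow>
     (\<exists>v\<in>verts G. G' = delete_node G v) \<or> (\<exists>v\<in>verts G'. G = delete_node G' v)"

definition Q_del_N :: "'a graph \<Rightarrow> nat \<Rightarrow> int" where
  "Q_del_N G \<tau> = - int (Min {card (verts G) - card (verts H) | H.
       node_subgraph H G \<and> max_degree H \<le> \<tau>})"

end

theory Submission
  imports Defs
begin

(* Deleting nodes never increases degrees, so the feasible kept-node sets are closed
   downwards.  A feasible set of G minus v is feasible for G at the cost of one further
   deletion (v itself), and removing v from a feasible set of G gives a feasible set of
   G minus v that is no more expensive. *)

lemma graph_finite_verts: "graph G \<Longrightarrow> finite (verts G)"
  unfolding graph_def by blast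

lemma graph_edge_subset_verts: "graph G \<Longrightarrow> e \<in> edges G \<Longrightarrow> e \<subseteq> verts G"
  unfolding graph_def by fastforce

lemma graph_finite_edges: "graph G \<Longrightarrow> finite (edges G)"
  by (meson Pow_iff finite_Pow_iff finite_subset graph_edge_subset_verts
      graph_finite_verts subsetI)

lemma verts_induced_sub [simp]: "verts (induced_sub G S) = S"
  unfolding induced_sub_def verts_def by simp

lemma edges_induced_sub [simp]: "edges (induced_sub G S) = {e \<in> edges G. e \<subseteq> S}"
  unfolding induced_sub_def edges_def by simp

lemma verts_delete_node [simp]: "verts (delete_node G v) = verts G - {v}"
  unfolding delete_node_def by simp

lemma induced_sub_induced_sub:
  "T \<subseteq> S \<Longrightarrow> induced_sub (induced_sub G S) T = induced_sub G T"
  unfolding induced_sub_def edges_def by auto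

lemma induced_sub_verts: "graph G \<Longrightarrow> induced_sub G (verts G) = G"
  unfolding induced_sub_def
  by (metis (no_types, lifting) Collect_cong Collect_mem_eq edges_def graph_edge_subset_verts
      prod.collapse verts_def)

lemma max_degree_le_iff:
  "finite (verts G) \<Longrightarrow> max_degree G \<le> \<tau> \<longleftrightarrow> (\<forall>v\<in>verts G. degree G v \<le> \<tau>)"
  unfolding max_degree_def by auto

lemma degree_induced_sub_mono:
  assumes "finite (edges G)" and "T \<subseteq> S"
  shows "degree (induced_sub G T) v \<le> degree (induced_sub G S) v"
  unfolding degree_def by (rule card_mono) (use assms in auto)

lemma max_degree_induced_sub_mono:
  assumes G: "graph G" and "T \<subseteq> S" and "S \<subseteq> verts G"
  shows "max_degree (induced_sub G T) \<le> max_degree (induced_sub G S)"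
proof -
  have fin_S: "finite S"
    using \<open>S \<subseteq> verts G\<close> graph_finite_verts[OF G] by (rule finite_subset)
  have fin_T: "finite T"
    using \<open>T \<subseteq> S\<close> fin_S by (rule finite_subset)
  have S_bound: "\<forall>v\<in>S. degree (induced_sub G S) v \<le> max_degree (induced_sub G S)"
    using max_degree_le_iff[of "induced_sub G S" "max_degree (induced_sub G S)"] fin_S by simp
  have "degree (induced_sub G T) v \<le> max_degree (induced_sub G S)" if "v \<in> T" for v
  proof -
    have "degree (induced_sub G T) v \<le> degree (induced_sub G S) v"
      using degree_induced_sub_mono[OF graph_finite_edges[OF G] \<open>T \<subseteq> S\<close>] .
    also have "\<dots> \<le> max_degree (induced_sub G S)"
      using S_bound \<open>T \<subseteq> S\<close> that by blast
    finally show ?thesis .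
  qed
  then show ?thesis
    using max_degree_le_iff[of "induced_sub G T"] fin_T by simp
qed

definition deletion_costs :: "'a graph \<Rightarrow> nat \<Rightarrow> nat set" where
  "deletion_costs G \<tau> = {card (verts G) - card S | S.
       S \<subseteq> verts G \<and> max_degree (induced_sub G S) \<le> \<tau>}"

definition min_node_deletions :: "'a graph \<Rightarrow> nat \<Rightarrow> nat" where
  "min_node_deletions G \<tau> = Min (deletion_costs G \<tau>)"

lemma Q_del_N_eq_min_node_deletions: "Q_del_N G \<tau> = - int (min_node_deletions G \<tau>)"
  unfolding Q_del_N_def min_node_deletions_def deletion_costs_def node_subgraph_def
  by (metis verts_induced_sub)

lemma finite_deletion_costs: "finite (deletion_costs G \<tau>)"
proof (rule finite_subset)
  show "deletion_costs G \<tau> \<subseteq> {..card (verts G)}"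
    unfolding deletion_costs_def by auto
qed simp

lemma deletion_costs_nonempty: "deletion_costs G \<tau> \<noteq> {}"
proof -
  have "max_degree (induced_sub G {}) \<le> \<tau>"
    unfolding max_degree_def by simp
  then show ?thesis
    unfolding deletion_costs_def by blast
qed

lemma min_node_deletions_le:
  assumes "S \<subseteq> verts G" and "max_degree (induced_sub G S) \<le> \<tau>"
  shows "min_node_deletions G \<tau> \<le> card (verts G) - card S"
  unfolding min_node_deletions_def
  by (rule Min_le[OF finite_deletion_costs]) (use assms in \<open>unfold deletion_costs_def, blast\<close>)

lemma min_node_deletions_attained:
  obtains S where "S \<subseteq> verts G" and "max_degree (induced_sub G S) \<le> \<tau>"
    and "min_node_deletions G \<tau> = card (verts G) - card S"
proof -
  have "min_node_deletions G \<tau> \<in> deletion_costs G \<tau>"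
    unfolding min_node_deletions_def
    by (rule Min_in[OF finite_deletion_costs deletion_costs_nonempty])
  then show ?thesis
    unfolding deletion_costs_def by (auto intro: that)
qed

lemma min_node_deletions_antimono:
  assumes "\<tau>1 \<le> \<tau>2"
  shows "min_node_deletions G \<tau>2 \<le> min_node_deletions G \<tau>1"
proof -
  obtain S where "S \<subseteq> verts G" "max_degree (induced_sub G S) \<le> \<tau>1"
    and "min_node_deletions G \<tau>1 = card (verts G) - card S"
    by (rule min_node_deletions_attained)
  then show ?thesis
    using min_node_deletions_le[of S G \<tau>2] assms by simp
qed

lemma min_node_deletions_eq_0:
  assumes "graph G" and "max_degree G \<le> \<tau>"
  shows "min_node_deletions G \<tau> = 0"
  using min_node_deletions_le[of "verts G" G \<tau>] assms by (simp add: induced_sub_verts)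

lemma min_node_deletions_delete_node_le:
  assumes G: "graph G" and "v \<in> verts G"
  shows "min_node_deletions (delete_node G v) \<tau> \<le> min_node_deletions G \<tau>"
proof -
  obtain S where S: "S \<subseteq> verts G" "max_degree (induced_sub G S) \<le> \<tau>"
    and opt: "min_node_deletions G \<tau> = card (verts G) - card S"
    by (rule min_node_deletions_attained)
  have "induced_sub (delete_node G v) (S - {v}) = induced_sub G (S - {v})"
    unfolding delete_node_def using S(1) by (intro induced_sub_induced_sub) blast
  moreover have "max_degree (induced_sub G (S - {v})) \<le> max_degree (induced_sub G S)"
    using max_degree_induced_sub_mono[OF G _ S(1)] by blast
  ultimately have "min_node_deletions (delete_node G v) \<tau>
      \<le> card (verts G - {v}) - card (S - {v})"
    using min_node_deletions_le[of "S - {v}" "delete_node G v" \<tau>] S by auto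
  moreover have "card (verts G - {v}) - card (S - {v}) \<le> card (verts G) - card S"
    using S(1) \<open>v \<in> verts G\<close> graph_finite_verts[OF G] finite_subset[OF S(1)]
    by (cases "v \<in> S") (auto simp: card_Diff_singleton)
  ultimately show ?thesis
    using opt by linarith
qed

lemma min_node_deletions_le_delete_node:
  assumes G: "graph G" and "v \<in> verts G"
  shows "min_node_deletions G \<tau> \<le> min_node_deletions (delete_node G v) \<tau> + 1"
proof -
  obtain T where T: "T \<subseteq> verts G - {v}" "max_degree (induced_sub (delete_node G v) T) \<le> \<tau>"
    and opt: "min_node_deletions (delete_node G v) \<tau> = card (verts G - {v}) - card T"
    using min_node_deletions_attained[of "delete_node G v" \<tau>] by auto
  have "induced_sub (delete_node G v) T = induced_sub G T"
    unfolding delete_node_def using T(1) by (rule induced_sub_induced_sub)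
  then have "min_node_deletions G \<tau> \<le> card (verts G) - card T"
    using min_node_deletions_le[of T G \<tau>] T by auto
  moreover have "card T \<le> card (verts G - {v})"
    using T(1) graph_finite_verts[OF G] by (intro card_mono) auto
  ultimately show ?thesis
    using opt \<open>v \<in> verts G\<close> graph_finite_verts[OF G] by simp
qed

lemma Q_del_N_delete_node:
  assumes "graph G" and "v \<in> verts G"
  shows "Q_del_N G \<tau> \<le> Q_del_N (delete_node G v) \<tau>"
    and "Q_del_N (delete_node G v) \<tau> \<le> Q_del_N G \<tau> + 1"
  using min_node_deletions_delete_node_le[OF assms, of \<tau>]
    min_node_deletions_le_delete_node[OF assms, of \<tau>]
  unfolding Q_del_N_eq_min_node_deletions by linarith+

lemma node_neighboring_node_subgraph_delete_node:
  assumes "node_neighboring G G'" and "node_subgraph G G'"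
  obtains v where "v \<in> verts G'" and "G = delete_node G' v"
proof -
  from \<open>node_subgraph G G'\<close> obtain S where "S \<subseteq> verts G'" "G = induced_sub G' S"
    unfolding node_subgraph_def by blast
  have "G' \<noteq> delete_node G v" if "v \<in> verts G" for v
  proof
    assume "G' = delete_node G v"
    then have "verts G' = verts G - {v}"
      by (simp only: verts_delete_node)
    moreover have "verts G = S"
      using \<open>G = induced_sub G' S\<close> by (simp only: verts_induced_sub)
    ultimately show False
      using \<open>S \<subseteq> verts G'\<close> that by blast
  qed
  with assms(1) that show ?thesis
    unfolding node_neighboring_def by blast
qed

theorem mainTheorem4:
  fixes G G' :: "'a graph"
  assumes "graph G" and "graph G'"
  shows "(\<forall>\<tau>1 \<tau>2. 1 \<le> \<tau>1 \<longrightarrow> \<tau>1 \<le> \<tau>2 \<longrightarrow> Q_del_N G \<tau>1 \<le> Q_del_N G \<tau>2)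
       \<and> (\<forall>\<tau>. 1 \<le> \<tau> \<longrightarrow> max_degree G \<le> \<tau> \<longrightarrow> Q_del_N G \<tau> = 0)
       \<and> (node_neighboring G G' \<longrightarrow>
            (\<forall>\<tau>. 1 \<le> \<tau> \<longrightarrow> \<bar>Q_del_N G \<tau> - Q_del_N G' \<tau>\<bar> \<le> 1))
       \<and> (node_neighboring G G' \<and> node_subgraph G G' \<longrightarrow>
            (\<forall>\<tau>. 1 \<le> \<tau> \<longrightarrow> Q_del_N G \<tau> \<ge> Q_del_N G' \<tau>))"
proof (intro conjI allI impI)
  fix \<tau>1 \<tau>2 :: nat
  assume "\<tau>1 \<le> \<tau>2"
  then show "Q_del_N G \<tau>1 \<le> Q_del_N G \<tau>2"
    using min_node_deletions_antimono by (simp add: Q_del_N_eq_min_node_deletions)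
next
  fix \<tau> :: nat
  assume "max_degree G \<le> \<tau>"
  then show "Q_del_N G \<tau> = 0"
    using min_node_deletions_eq_0[OF assms(1)] by (simp add: Q_del_N_eq_min_node_deletions)
next
  fix \<tau> :: nat
  assume "node_neighboring G G'"
  then consider v where "v \<in> verts G" "G' = delete_node G v"
    | v where "v \<in> verts G'" "G = delete_node G' v"
    unfolding node_neighboring_def by blast
  then show "\<bar>Q_del_N G \<tau> - Q_del_N G' \<tau>\<bar> \<le> 1"
  proof cases
    case (1 v)
    then show ?thesis
      using Q_del_N_delete_node[OF assms(1) \<open>v \<in> verts G\<close>, of \<tau>] by simp
  next
    case (2 v)
    then show ?thesis
      using Q_del_N_delete_node[OF assms(2) \<open>v \<in> verts G'\<close>, of \<tau>] by simp
  qed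
next
  fix \<tau> :: nat
  assume "node_neighboring G G' \<and> node_subgraph G G'"
  then obtain v where "v \<in> verts G'" and "G = delete_node G' v"
    using node_neighboring_node_subgraph_delete_node by blast
  then show "Q_del_N G' \<tau> \<le> Q_del_N G \<tau>"
    using Q_del_N_delete_node(1)[OF assms(2)] by blast
qed

end
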